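(* Let $n\ge 4$. The twisted braid group $\mathcal{TB}_n$ has the following reduced presentation: it is isomorphic to the group $$G=\langle\, \sigma_1, b_1, v_1,\dots,v_{n-1} \mid R\,\rangle$$ where $R$ consists of the relations $v_iv_{i+1}v_i=v_{i+1}v_iv_{i+1}$ ($1\le i\le n-2$), $v_iv_j=v_jv_i$ ($|i-j|\ge2$), $v_i^2=1$ ($1\le i\le n-1$), $\sigma_1v_j=v_j\sigma_1$ ($j>2$), $b_1^2=1$, $b_1v_j=v_jb_1$ ($j>1$), $(v_1\sigma_1v_1)(v_2\sigma_1v_2)(v_1\sigma_1v_1)=(v_2\sigma_1v_2)(v_1\sigma_1v_1)(v_2\sigma_1v_2)$, $\sigma_1(v_2v_3v_1v_2\sigma_1v_2v_1v_3v_2)=(v_2v_3v_1v_2\sigma_1v_2v_1v_3v_2)\sigma_1$, $b_1(v_1b_1v_1)=(v_1b_1v_1)b_1$, $\sigma_1(v_2v_1b_1v_1v_2)=(v_2v_1b_1v_1v_2)\sigma_1$, $(v_1b_1v_1)b_1\sigma_1b_1(v_1b_1v_1)=v_1\sigma_1v_1$. The isomorphism $G\to\mathcal{TB}_n$ sends $\sigma_1, b_1, v_1,\dots,v_{n-1}$ to the elements of the same names, and its inverse sends $v_i\mapsto v_i$, $\sigma_1\mapsto\sigma_1$, $b_1\mapsto b_1$, $\sigma_{i+1}\mapsto (v_i\cdots v_2v_1)(v_{i+1}\cdots v_3v_2)\sigma_1(v_2v_3\cdots v_{i+1})(v_1v_2\cdots v_i)$ for $1\le i\le n-2$, and $b_{i+1}\mapsto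 (v_iv_{i-1}\cdots v_1)b_1(v_1v_2\cdots v_i)$ for $1\le i\le n-1$.
   Context: The twisted braid group $\mathcal{TB}_n$ (the group of isotopy classes of twisted braids on $n$ strands, i.e. braids on $n$ strands with classical crossings, virtual crossings and bars on strands, under braid concatenation) is the group with generators $\sigma_1,\dots,\sigma_{n-1}$ (classical crossing of strands $i,i+1$), $v_1,\dots,v_{n-1}$ (virtual crossing of strands $i,i+1$) and $b_1,\dots,b_n$ (a bar on strand $i$), subject to the relations: braid relations $\sigma_i\sigma_{i+1}\sigma_i=\sigma_{i+1}\sigma_i\sigma_{i+1}$ ($1\le i\le n-2$), $\sigma_i\sigma_j=\sigma_j\sigma_i$ ($|i-j|\ge2$); virtual relations $v_i^2=1$, $v_iv_j=v_jv_i$ ($|i-j|\ge2$), $v_iv_{i+1}v_i=v_{i+1}v_iv_{i+1}$; twisted relations $b_i^2=1$ ($1\le i\le n$), $b_ib_j=b_jb_i$ ($i\ne j$); mixed relations $\sigma_iv_j=v_j\sigma_i$ ($|i-j|\ge2$), $v_i\sigma_{i+1}v_i=v_{i+1}\sigma_iv_{i+1}$ ($1\le i\le n-2$), $b_iv_i=v_ib_{i+1}$ ($1\le i\le n-1$), $b_ib_{i+1}\sigma_ib_{i+1}b_i=v_i\sigma_iv_i$ ($1\le i\le n-1$), $b_iv_j=v_jb_i$ ($j>i$ or $j<i-1$), $b_i\sigma_j=\sigma_jb_i$ ($j>i$ or $j<i-1$). *)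

theory Defs
  imports "HOL-Algebra.Group"
begin

text \<open>A word over generators 'a is a list of letters (x, e) where e = True means
the inverse letter x^-1.\<close>

type_synonym 'a word = "('a \<times> bool) list"

definition wf_word :: "'a set \<Rightarrow> 'a word \<Rightarrow> bool" where
  "wf_word gens w \<longleftrightarrow> (\<forall>x\<in>set w. fst x \<in> gens)"

inductive pres_eq :: "'a set \<Rightarrow> ('a word \<times> 'a word) set \<Rightarrow> 'a word \<Rightarrow> 'a word \<Rightarrow> bool"
  for gens R where
  refl: "wf_word gens w \<Longrightarrow> pres_eq gens R w w"
| sym: "pres_eq gens R u w \<Longrightarrow> pres_eq gens R w u"
| trans: "pres_eq gens R u v \<Longrightarrow> pres_eq gens R v w \<Longrightarrow> pres_eq gens R u w"
| cancel: "wf_word gens u \<Longrightarrow> wf_word gens v \<Longrightarrow> x \<in> gens \<Longrightarrow>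
     pres_eq gens R (u @ [(x, e), (x, \<not> e)] @ v) (u @ v)"
| rel: "(l, r) \<in> R \<Longrightarrow> wf_word gens l \<Longrightarrow> wf_word gens r \<Longrightarrow>
     wf_word gens u \<Longrightarrow> wf_word gens v \<Longrightarrow>
     pres_eq gens R (u @ l @ v) (u @ r @ v)"

definition pres_class :: "'a set \<Rightarrow> ('a word \<times> 'a word) set \<Rightarrow> 'a word \<Rightarrow> 'a word set" where
  "pres_class gens R w = {w'. pres_eq gens R w w'}"

definition presented_group :: "'a set \<Rightarrow> ('a word \<times> 'a word) set \<Rightarrow> ('a word set) monoid" where
  "presented_group gens R =
     \<lparr> carrier = pres_class gens R ` {w. wf_word gens w},
       mult = (\<lambda>A B. pres_class gens R ((SOME a. a \<in> A) @ (SOME b. b \<in> B))),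
       one = pres_class gens R [] \<rparr>"

datatype tbgen = TSig nat | TVir nat | TBar nat

definition s :: "nat \<Rightarrow> tbgen word" where "s i = [(TSig i, False)]"
definition v :: "nat \<Rightarrow> tbgen word" where "v i = [(TVir i, False)]"
definition b :: "nat \<Rightarrow> tbgen word" where "b i = [(TBar i, False)]"

definition tb_gens :: "nat \<Rightarrow> tbgen set" where
  "tb_gens n = {TSig i | i. 1 \<le> i \<and> i \<le> n - 1} \<union> {TVir i | i. 1 \<le> i \<and> i \<le> n - 1}
             \<union> {TBar i | i. 1 \<le> i \<and> i \<le> n}"

definition tb_rels :: "nat \<Rightarrow> (tbgen word \<times> tbgen word) set" where
  "tb_rels n =
     \<comment> \<open>braid relations\<close>
     {(s i @ s (i+1) @ s i, s (i+1) @ s i @ s (i+1)) | i. 1 \<le> i \<and> i \<le> n - 2}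
   \<union> {(s i @ s j, s j @ s i) | i j. 1 \<le> i \<and> i \<le> n - 1 \<and> 1 \<le> j \<and> j \<le> n - 1 \<and> (i + 2 \<le> j \<or> j + 2 \<le> i)}
     \<comment> \<open>virtual relations\<close>
   \<union> {(v i @ v i, []) | i. 1 \<le> i \<and> i \<le> n - 1}
   \<union> {(v i @ v j, v j @ v i) | i j. 1 \<le> i \<and> i \<le> n - 1 \<and> 1 \<le> j \<and> j \<le> n - 1 \<and> (i + 2 \<le> j \<or> j + 2 \<le> i)}
   \<union> {(v i @ v (i+1) @ v i, v (i+1) @ v i @ v (i+1)) | i. 1 \<le> i \<and> i \<le> n - 2}
     \<comment> \<open>twisted relations\<close>
   \<union> {(b i @ b i, []) | i. 1 \<le> i \<and> i \<le> n}
   \<union> {(b i @ b j, b j @ b i) | i j. 1 \<le> i \<and> i \<le> n \<and> 1 \<le> j \<and> j \<le> n \<and> i \<noteq> j}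
     \<comment> \<open>mixed relations\<close>
   \<union> {(s i @ v j, v j @ s i) | i j. 1 \<le> i \<and> i \<le> n - 1 \<and> 1 \<le> j \<and> j \<le> n - 1 \<and> (i + 2 \<le> j \<or> j + 2 \<le> i)}
   \<union> {(v i @ s (i+1) @ v i, v (i+1) @ s i @ v (i+1)) | i. 1 \<le> i \<and> i \<le> n - 2}
   \<union> {(b i @ v i, v i @ b (i+1)) | i. 1 \<le> i \<and> i \<le> n - 1}
   \<union> {(b i @ b (i+1) @ s i @ b (i+1) @ b i, v i @ s i @ v i) | i. 1 \<le> i \<and> i \<le> n - 1}
   \<union> {(b i @ v j, v j @ b i) | i j. 1 \<le> i \<and> i \<le> n \<and> 1 \<le> j \<and> j \<le> n - 1 \<and> (j > i \<or> j + 1 < i)}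
   \<union> {(b i @ s j, s j @ b i) | i j. 1 \<le> i \<and> i \<le> n \<and> 1 \<le> j \<and> j \<le> n - 1 \<and> (j > i \<or> j + 1 < i)}"

definition TB :: "nat \<Rightarrow> (tbgen word set) monoid" where
  "TB n = presented_group (tb_gens n) (tb_rels n)"

definition red_gens :: "nat \<Rightarrow> tbgen set" where
  "red_gens n = {TSig 1, TBar 1} \<union> {TVir i | i. 1 \<le> i \<and> i \<le> n - 1}"

definition red_rels :: "nat \<Rightarrow> (tbgen word \<times> tbgen word) set" where
  "red_rels n =
     {(v i @ v (i+1) @ v i, v (i+1) @ v i @ v (i+1)) | i. 1 \<le> i \<and> i \<le> n - 2}
   \<union> {(v i @ v j, v j @ v i) | i j. 1 \<le> i \<and> i \<le> n - 1 \<and> 1 \<le> j \<and> j \<le> n - 1 \<and> (i + 2 \<le> j \<or> j + 2 \<le> i)}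
   \<union> {(v i @ v i, []) | i. 1 \<le> i \<and> i \<le> n - 1}
   \<union> {(s 1 @ v j, v j @ s 1) | j. 2 < j \<and> j \<le> n - 1}
   \<union> {(b 1 @ b 1, [])}
   \<union> {(b 1 @ v j, v j @ b 1) | j. 1 < j \<and> j \<le> n - 1}
   \<union> {((v 1 @ s 1 @ v 1) @ (v 2 @ s 1 @ v 2) @ (v 1 @ s 1 @ v 1),
        (v 2 @ s 1 @ v 2) @ (v 1 @ s 1 @ v 1) @ (v 2 @ s 1 @ v 2))}
   \<union> {(s 1 @ (v 2 @ v 3 @ v 1 @ v 2 @ s 1 @ v 2 @ v 1 @ v 3 @ v 2),
        (v 2 @ v 3 @ v 1 @ v 2 @ s 1 @ v 2 @ v 1 @ v 3 @ v 2) @ s 1)}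
   \<union> {(b 1 @ (v 1 @ b 1 @ v 1), (v 1 @ b 1 @ v 1) @ b 1)}
   \<union> {(s 1 @ (v 2 @ v 1 @ b 1 @ v 1 @ v 2), (v 2 @ v 1 @ b 1 @ v 1 @ v 2) @ s 1)}
   \<union> {((v 1 @ b 1 @ v 1) @ b 1 @ s 1 @ b 1 @ (v 1 @ b 1 @ v 1), v 1 @ s 1 @ v 1)}"

definition RedTB :: "nat \<Rightarrow> (tbgen word set) monoid" where
  "RedTB n = presented_group (red_gens n) (red_rels n)"

text \<open>v_i v_(i-1) ... v_j  and  v_j v_(j+1) ... v_i  (empty if i < j).\<close>
definition vdown :: "nat \<Rightarrow> nat \<Rightarrow> tbgen word" where
  "vdown i j = concat (map v (rev [j..<i+1]))"
definition vup :: "nat \<Rightarrow> nat \<Rightarrow> tbgen word" where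
  "vup j i = concat (map v [j..<i+1])"

text \<open>Images of sigma_(i+1) and b_(i+1) under the inverse isomorphism.\<close>
definition sig_word :: "nat \<Rightarrow> tbgen word" where
  "sig_word i = vdown i 1 @ vdown (i+1) 2 @ s 1 @ vup 2 (i+1) @ vup 1 i"
definition bar_word :: "nat \<Rightarrow> tbgen word" where
  "bar_word i = vdown i 1 @ b 1 @ vup 1 i"

end

(* The mixed relations v_i sigma_(i+1) v_i = v_(i+1) sigma_i v_(i+1) and b_i v_i = v_i b_(i+1) make
   every sigma_(i+1) and b_(i+1) a conjugate of sigma_1 resp. b_1 by a word in the v_j, so sigma_1,
   b_1 and the v_j generate TB_n. Conversely, wherever the v_j satisfy the Coxeter relations of the
   symmetric group, conjugation by v_j moves these conjugates around like the indices of braid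
   generators; the reduced relations are, up to conjugation, the twisted braid relations at the
   smallest indices, and conjugation transports them to all indices. So each generator assignment
   respects the other presentation, and by von Dyck's theorem the two induce mutually inverse
   homomorphisms. *)

theory Submission
  imports Defs
begin

lemma wf_word_simps [simp]:
  "wf_word gens []"
  "wf_word gens (a # w) \<longleftrightarrow> fst a \<in> gens \<and> wf_word gens w"
  "wf_word gens (u @ w) \<longleftrightarrow> wf_word gens u \<and> wf_word gens w"
  by (auto simp: wf_word_def)

lemma pres_eq_wf: "pres_eq gens R u w \<Longrightarrow> wf_word gens u \<and> wf_word gens w"
  by (induction rule: pres_eq.induct) auto

lemma pres_eq_in_context:
  "pres_eq gens R u u' \<Longrightarrow> wf_word gens a \<Longrightarrow> wf_word gens c \<Longrightarrow>
   pres_eq gens R (a @ u @ c) (a @ u' @ c)"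
proof (induction rule: pres_eq.induct)
  case (refl w)
  then show ?case by (simp add: pres_eq.refl)
next
  case (sym u w)
  then show ?case by (blast intro: pres_eq.sym)
next
  case (trans u v w)
  then show ?case by (blast intro: pres_eq.trans)
next
  case (cancel u v x e)
  then show ?case using pres_eq.cancel[of gens "a @ u" "v @ c" x R e] by simp
next
  case (rel l r u v)
  then show ?case using pres_eq.rel[of l r R gens "a @ u" "v @ c"] by simp
qed

lemma pres_eq_append:
  assumes "pres_eq gens R u u'" and "pres_eq gens R w w'"
  shows "pres_eq gens R (u @ w) (u' @ w')"
proof -
  have "pres_eq gens R ([] @ u @ w) ([] @ u' @ w)"
    using assms pres_eq_wf by (intro pres_eq_in_context) auto
  moreover have "pres_eq gens R (u' @ w @ []) (u' @ w' @ [])"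
    using assms pres_eq_wf by (intro pres_eq_in_context) auto
  ultimately show ?thesis by (auto intro: pres_eq.trans)
qed

lemma pres_class_eq_iff:
  assumes "wf_word gens u"
  shows "pres_class gens R u = pres_class gens R w \<longleftrightarrow> pres_eq gens R u w"
proof
  assume "pres_class gens R u = pres_class gens R w"
  moreover have "u \<in> pres_class gens R u"
    using assms by (simp add: pres_class_def pres_eq.refl)
  ultimately show "pres_eq gens R u w"
    by (auto simp: pres_class_def intro: pres_eq.sym)
next
  assume "pres_eq gens R u w"
  then show "pres_class gens R u = pres_class gens R w"
    unfolding pres_class_def by (blast intro: pres_eq.sym pres_eq.trans)
qed

lemma pres_eq_some_class:
  assumes "wf_word gens u"
  shows "pres_eq gens R u (SOME a. a \<in> pres_class gens R u)"
proof -
  have "u \<in> pres_class gens R u"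
    using assms by (simp add: pres_class_def pres_eq.refl)
  then show ?thesis
    by (metis (mono_tags) mem_Collect_eq pres_class_def someI)
qed

lemma presented_group_carrier:
  "carrier (presented_group gens R) = pres_class gens R ` {w. wf_word gens w}"
  by (simp add: presented_group_def)

lemma presented_group_one: "\<one>\<^bsub>presented_group gens R\<^esub> = pres_class gens R []"
  by (simp add: presented_group_def)

lemma presented_group_mult:
  assumes "wf_word gens u" and "wf_word gens w"
  shows "pres_class gens R u \<otimes>\<^bsub>presented_group gens R\<^esub> pres_class gens R w = pres_class gens R (u @ w)"
proof -
  have "pres_eq gens R (u @ w) ((SOME a. a \<in> pres_class gens R u) @ (SOME a. a \<in> pres_class gens R w))"
    using assms by (intro pres_eq_append pres_eq_some_class)
  then have "pres_class gens R (u @ w) =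
    pres_class gens R ((SOME a. a \<in> pres_class gens R u) @ (SOME a. a \<in> pres_class gens R w))"
    using assms by (simp add: pres_class_eq_iff)
  then show ?thesis
    by (simp add: presented_group_def)
qed

lemma pres_class_closed: "wf_word gens w \<Longrightarrow> pres_class gens R w \<in> carrier (presented_group gens R)"
  by (simp add: presented_group_carrier)

lemma group_presented_group: "group (presented_group gens R)"
proof -
  let ?G = "presented_group gens R"
  interpret monoid ?G
    by (rule monoidI) (auto simp: presented_group_carrier presented_group_one presented_group_mult)
  have letter_unit: "pres_class gens R [(x, e)] \<in> Units ?G" if "x \<in> gens" for x e
  proof -
    have "pres_class gens R [(x, e')] \<otimes>\<^bsub>?G\<^esub> pres_class gens R [(x, \<not> e')] = \<one>\<^bsub>?G\<^esub>" for e'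
      using pres_eq.cancel[of gens "[]" "[]" x R e'] that
      by (simp add: presented_group_mult presented_group_one pres_class_eq_iff)
    from this[of e] this[of "\<not> e"] show ?thesis
      using that unfolding Units_def
      by (auto intro!: bexI[of _ "pres_class gens R [(x, \<not> e)]"] pres_class_closed)
  qed
  have "pres_class gens R w \<in> Units ?G" if "wf_word gens w" for w
    using that
  proof (induction w)
    case Nil
    then show ?case by (simp flip: presented_group_one)
  next
    case (Cons a w)
    then have "pres_class gens R (a # w) = pres_class gens R [a] \<otimes>\<^bsub>?G\<^esub> pres_class gens R w"
      by (simp add: presented_group_mult)
    then show ?case
      using Cons letter_unit[of "fst a" "snd a"] by simp
  qed
  then show ?thesis
    by unfold_locales (auto simp: presented_group_carrier)
qed

section \<open>Evaluating words and von Dyck's theorem\<close>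

definition word_eval :: "('g, 'm) monoid_scheme \<Rightarrow> ('a \<Rightarrow> 'g) \<Rightarrow> 'a word \<Rightarrow> 'g" where
  "word_eval G f w = foldr (\<lambda>(x, e) y. (if e then inv\<^bsub>G\<^esub> f x else f x) \<otimes>\<^bsub>G\<^esub> y) w \<one>\<^bsub>G\<^esub>"

lemma word_eval_Nil [simp]: "word_eval G f [] = \<one>\<^bsub>G\<^esub>"
  by (simp add: word_eval_def)

lemma word_eval_Cons [simp]:
  "word_eval G f ((x, e) # w) = (if e then inv\<^bsub>G\<^esub> f x else f x) \<otimes>\<^bsub>G\<^esub> word_eval G f w"
  by (simp add: word_eval_def)

definition satisfies_rels :: "('g, 'm) monoid_scheme \<Rightarrow> ('a \<Rightarrow> 'g) \<Rightarrow> ('a word \<times> 'a word) set \<Rightarrow> bool" where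
  "satisfies_rels G f R \<longleftrightarrow> (\<forall>(l, r)\<in>R. word_eval G f l = word_eval G f r)"

context group
begin

lemma word_eval_closed [simp]:
  "f \<in> gens \<rightarrow> carrier G \<Longrightarrow> wf_word gens w \<Longrightarrow> word_eval G f w \<in> carrier G"
  by (induction w) (auto simp: Pi_iff)

lemma word_eval_append:
  "f \<in> gens \<rightarrow> carrier G \<Longrightarrow> wf_word gens u \<Longrightarrow> wf_word gens w \<Longrightarrow>
   word_eval G f (u @ w) = word_eval G f u \<otimes> word_eval G f w"
  by (induction u) (auto simp: Pi_iff m_assoc)

lemma word_eval_cong:
  "(\<And>x. x \<in> gens \<Longrightarrow> f x = f' x) \<Longrightarrow> wf_word gens w \<Longrightarrow> word_eval G f w = word_eval G f' w"
  by (induction w) auto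

lemma word_eval_pres_eq:
  assumes f: "f \<in> gens \<rightarrow> carrier G" and rels: "satisfies_rels G f R"
  shows "pres_eq gens R u w \<Longrightarrow> word_eval G f u = word_eval G f w"
proof (induction rule: pres_eq.induct)
  case (cancel u v x e)
  have "word_eval G f ((x, e) # (x, \<not> e) # v) = word_eval G f v"
    using f cancel.hyps by (cases e) (auto simp: Pi_iff m_assoc[symmetric])
  then show ?case
    using f cancel.hyps word_eval_append[of f gens u "(x, e) # (x, \<not> e) # v"]
      word_eval_append[of f gens u v]
    by simp
next
  case (rel l r u v)
  then show ?case
    using f rels by (auto simp: word_eval_append satisfies_rels_def)
qed simp_all

end

lemma (in group_hom) hom_word_eval:
  "f \<in> gens \<rightarrow> carrier G \<Longrightarrow> wf_word gens w \<Longrightarrow> h (word_eval G f w) = word_eval H (h \<circ> f) w"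
  by (induction w) (auto simp: Pi_iff)

text \<open>The value \<open>\<one>\<close> off \<open>gens\<close> only makes \<open>gen_class\<close> a total map into the carrier.\<close>

definition gen_class :: "'a set \<Rightarrow> ('a word \<times> 'a word) set \<Rightarrow> 'a \<Rightarrow> 'a word set" where
  "gen_class gens R x =
     (if x \<in> gens then pres_class gens R [(x, False)] else \<one>\<^bsub>presented_group gens R\<^esub>)"

lemma gen_class_closed: "gen_class gens R x \<in> carrier (presented_group gens R)"
  by (simp add: gen_class_def pres_class_closed
      monoid.one_closed[OF group.is_monoid[OF group_presented_group]])

lemma word_eval_gen_class:
  "wf_word gens w \<Longrightarrow> word_eval (presented_group gens R) (gen_class gens R) w = pres_class gens R w"
proof (induction w)
  case Nil
  then show ?case by (simp add: presented_group_one)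
next
  case (Cons a w)
  obtain x e where a: "a = (x, e)" by force
  interpret group "presented_group gens R" by (rule group_presented_group)
  have x: "x \<in> gens" and w: "wf_word gens w" using Cons.prems a by auto
  have "inv\<^bsub>presented_group gens R\<^esub> pres_class gens R [(x, False)] = pres_class gens R [(x, True)]"
    using pres_eq.cancel[of gens "[]" "[]" x R True] x
    by (intro inv_equality)
      (simp_all add: presented_group_mult presented_group_one pres_class_eq_iff pres_class_closed)
  then have "(if e then inv\<^bsub>presented_group gens R\<^esub> gen_class gens R x else gen_class gens R x) =
    pres_class gens R [(x, e)]"
    using x by (simp add: gen_class_def)
  then show ?case
    using Cons.IH[OF w] x w by (simp add: a presented_group_mult)
qed

lemma presented_group_satisfies_rels:
  assumes "\<And>l r. (l, r) \<in> R \<Longrightarrow> wf_word gens l \<and> wf_word gens r"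
  shows "satisfies_rels (presented_group gens R) (gen_class gens R) R"
  unfolding satisfies_rels_def
proof clarify
  fix l r assume lr: "(l, r) \<in> R"
  have "pres_eq gens R ([] @ l @ []) ([] @ r @ [])"
    using assms[OF lr] by (intro pres_eq.rel[OF lr]) auto
  then show "word_eval (presented_group gens R) (gen_class gens R) l =
    word_eval (presented_group gens R) (gen_class gens R) r"
    using assms[OF lr] by (simp add: word_eval_gen_class pres_class_eq_iff)
qed

definition induced_hom :: "('g, 'm) monoid_scheme \<Rightarrow> ('a \<Rightarrow> 'g) \<Rightarrow> 'a word set \<Rightarrow> 'g" where
  "induced_hom G f A = word_eval G f (SOME w. w \<in> A)"

context group
begin

lemma induced_hom_class:
  assumes "f \<in> gens \<rightarrow> carrier G" and "satisfies_rels G f R" and "wf_word gens w"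
  shows "induced_hom G f (pres_class gens R w) = word_eval G f w"
  unfolding induced_hom_def
  using word_eval_pres_eq[OF assms(1,2) pres_eq_some_class[OF assms(3)]] by simp

lemma induced_hom_hom:
  assumes "f \<in> gens \<rightarrow> carrier G" and "satisfies_rels G f R"
  shows "induced_hom G f \<in> hom (presented_group gens R) G"
proof (rule homI)
  fix A B
  assume "A \<in> carrier (presented_group gens R)" "B \<in> carrier (presented_group gens R)"
  then obtain u w
    where "wf_word gens u" "A = pres_class gens R u" "wf_word gens w" "B = pres_class gens R w"
    by (auto simp: presented_group_carrier)
  then show "induced_hom G f (A \<otimes>\<^bsub>presented_group gens R\<^esub> B) = induced_hom G f A \<otimes> induced_hom G f B"
    using assms by (simp add: presented_group_mult induced_hom_class word_eval_append)
qed (auto simp: presented_group_carrier induced_hom_class assms word_eval_closed[OF assms(1)])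

end

lemma induced_hom_inverse:
  fixes gens :: "'a set" and R :: "('a word \<times> 'a word) set"
    and gens' :: "'b set" and R' :: "('b word \<times> 'b word) set"
  defines "G \<equiv> presented_group gens R" and "H \<equiv> presented_group gens' R'"
  assumes f: "f \<in> gens \<rightarrow> carrier H" "satisfies_rels H f R"
    and g: "g \<in> gens' \<rightarrow> carrier G" "satisfies_rels G g R'"
    and gf: "\<And>x. x \<in> gens \<Longrightarrow> induced_hom G g (f x) = gen_class gens R x"
    and A: "A \<in> carrier G"
  shows "induced_hom G g (induced_hom H f A) = A"
proof -
  interpret G: group G unfolding G_def by (rule group_presented_group)
  interpret H: group H unfolding H_def by (rule group_presented_group)
  interpret group_hom H G "induced_hom G g"
    using G.induced_hom_hom[OF g] unfolding H_def
    by (intro group_hom.intro group_hom_axioms.intro G.is_group H.is_group[unfolded H_def])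
  obtain w where w: "wf_word gens w" "A = pres_class gens R w"
    using A by (auto simp: G_def presented_group_carrier)
  have "induced_hom G g (induced_hom H f A) = word_eval G (induced_hom G g \<circ> f) w"
    using w by (simp add: H.induced_hom_class[OF f] hom_word_eval[OF f(1)])
  also have "\<dots> = word_eval G (gen_class gens R) w"
    using gf w by (intro G.word_eval_cong) auto
  also have "\<dots> = A"
    using w by (simp add: G_def word_eval_gen_class)
  finally show ?thesis .
qed

lemma induced_hom_iso:
  fixes gens :: "'a set" and R :: "('a word \<times> 'a word) set"
    and gens' :: "'b set" and R' :: "('b word \<times> 'b word) set"
  defines "G \<equiv> presented_group gens R" and "H \<equiv> presented_group gens' R'"
  assumes f: "f \<in> gens \<rightarrow> carrier H" "satisfies_rels H f R"
    and g: "g \<in> gens' \<rightarrow> carrier G" "satisfies_rels G g R'"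
    and gf: "\<And>x. x \<in> gens \<Longrightarrow> induced_hom G g (f x) = gen_class gens R x"
    and fg: "\<And>y. y \<in> gens' \<Longrightarrow> induced_hom H f (g y) = gen_class gens' R' y"
  shows "induced_hom H f \<in> iso G H"
proof -
  interpret G: group G unfolding G_def by (rule group_presented_group)
  interpret H: group H unfolding H_def by (rule group_presented_group)
  have hom_f: "induced_hom H f \<in> hom G H" and hom_g: "induced_hom G g \<in> hom H G"
    using H.induced_hom_hom[OF f] G.induced_hom_hom[OF g] by (simp_all add: G_def H_def)
  have "bij_betw (induced_hom H f) (carrier G) (carrier H)"
  proof (rule bij_betwI)
    show "induced_hom H f \<in> carrier G \<rightarrow> carrier H" using hom_f by (simp add: hom_def)
    show "induced_hom G g \<in> carrier H \<rightarrow> carrier G" using hom_g by (simp add: hom_def)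
    show "induced_hom G g (induced_hom H f A) = A" if "A \<in> carrier G" for A
      using induced_hom_inverse[OF f[unfolded H_def] g[unfolded G_def]] gf that
      by (simp add: G_def H_def)
    show "induced_hom H f (induced_hom G g B) = B" if "B \<in> carrier H" for B
      using induced_hom_inverse[OF g[unfolded G_def] f[unfolded H_def]] fg that
      by (simp add: G_def H_def)
  qed
  then show ?thesis using hom_f by (simp add: iso_def)
qed

section \<open>Conjugation by the virtual generators\<close>

lemma wf_word_UNIV [simp]: "wf_word UNIV w"
  by (simp add: wf_word_def)

lemma word_eval_letter_append [simp]:
  "word_eval G f (s i @ w) = f (TSig i) \<otimes>\<^bsub>G\<^esub> word_eval G f w"
  "word_eval G f (v i @ w) = f (TVir i) \<otimes>\<^bsub>G\<^esub> word_eval G f w"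
  "word_eval G f (b i @ w) = f (TBar i) \<otimes>\<^bsub>G\<^esub> word_eval G f w"
  by (simp_all add: s_def v_def b_def)

locale sym_gens = group G for G (structure) +
  fixes n :: nat and V :: "nat \<Rightarrow> 'a"
  assumes V_closed [simp]: "V i \<in> carrier G"
    and V_involution: "1 \<le> i \<Longrightarrow> i + 1 \<le> n \<Longrightarrow> V i \<otimes> V i = \<one>"
    and V_commute: "1 \<le> i \<Longrightarrow> i + 2 \<le> j \<Longrightarrow> j + 1 \<le> n \<Longrightarrow> V i \<otimes> V j = V j \<otimes> V i"
    and V_braid: "1 \<le> i \<Longrightarrow> i + 2 \<le> n \<Longrightarrow> V i \<otimes> V (i + 1) \<otimes> V i = V (i + 1) \<otimes> V i \<otimes> V (i + 1)"
begin

definition vconj :: "nat \<Rightarrow> 'a \<Rightarrow> 'a" where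
  "vconj i x = V i \<otimes> x \<otimes> V i"

lemma vconj_closed [simp]: "x \<in> carrier G \<Longrightarrow> vconj i x \<in> carrier G"
  by (simp add: vconj_def)

lemma vconj_vconj:
  assumes "1 \<le> i" "i + 1 \<le> n" "x \<in> carrier G"
  shows "vconj i (vconj i x) = x"
proof -
  have "vconj i (vconj i x) = (V i \<otimes> V i) \<otimes> x \<otimes> (V i \<otimes> V i)"
    using assms by (simp add: vconj_def m_assoc)
  then show ?thesis
    using assms by (simp add: V_involution)
qed

lemma vconj_mult:
  assumes "1 \<le> i" "i + 1 \<le> n" "x \<in> carrier G" "y \<in> carrier G"
  shows "vconj i (x \<otimes> y) = vconj i x \<otimes> vconj i y"
proof -
  have "vconj i x \<otimes> vconj i y = V i \<otimes> x \<otimes> (V i \<otimes> V i) \<otimes> y \<otimes> V i"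
    using assms by (simp add: vconj_def m_assoc)
  then show ?thesis
    using assms by (simp add: V_involution vconj_def m_assoc)
qed

lemma vconj_one: "1 \<le> i \<Longrightarrow> i + 1 \<le> n \<Longrightarrow> vconj i \<one> = \<one>"
  by (simp add: vconj_def V_involution)

lemma vconj_eq_iff_commute:
  assumes "1 \<le> i" "i + 1 \<le> n" "x \<in> carrier G"
  shows "vconj i x = x \<longleftrightarrow> x \<otimes> V i = V i \<otimes> x"
proof -
  have "vconj i x \<otimes> V i = V i \<otimes> x"
    using assms by (simp add: vconj_def m_assoc V_involution)
  then show ?thesis
    using assms by (metis V_closed vconj_closed m_closed right_cancel)
qed

lemma vconj_commute:
  assumes "1 \<le> i" "i + 2 \<le> j" "j + 1 \<le> n" "x \<in> carrier G"
  shows "vconj i (vconj j x) = vconj j (vconj i x)"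
proof -
  have "vconj i (vconj j x) = (V i \<otimes> V j) \<otimes> x \<otimes> (V j \<otimes> V i)"
    using assms by (simp add: vconj_def m_assoc)
  also have "\<dots> = (V j \<otimes> V i) \<otimes> x \<otimes> (V i \<otimes> V j)"
    using assms V_commute[of i j] by simp
  also have "\<dots> = vconj j (vconj i x)"
    using assms by (simp add: vconj_def m_assoc)
  finally show ?thesis .
qed

lemma vconj_braid:
  assumes "1 \<le> i" "i + 2 \<le> n" "x \<in> carrier G"
  shows "vconj i (vconj (i + 1) (vconj i x)) = vconj (i + 1) (vconj i (vconj (i + 1) x))"
proof -
  have "vconj i (vconj (i + 1) (vconj i x)) =
    (V i \<otimes> V (i + 1) \<otimes> V i) \<otimes> x \<otimes> (V i \<otimes> V (i + 1) \<otimes> V i)"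
    using assms by (simp add: vconj_def m_assoc)
  also have "\<dots> = (V (i + 1) \<otimes> V i \<otimes> V (i + 1)) \<otimes> x \<otimes> (V (i + 1) \<otimes> V i \<otimes> V (i + 1))"
    using assms V_braid[of i] by simp
  also have "\<dots> = vconj (i + 1) (vconj i (vconj (i + 1) x))"
    using assms by (simp add: vconj_def m_assoc)
  finally show ?thesis .
qed

lemma vconj_fixes_conjugate:
  assumes "1 \<le> p" "q = p + 1" "r = q + 1" "r + 1 \<le> n" "t \<in> carrier G" "vconj r t = t"
  shows "vconj p (vconj q (vconj r (vconj p (vconj q t)))) = vconj q (vconj r (vconj p (vconj q t)))"
proof -
  have "vconj p (vconj q (vconj r (vconj p (vconj q t)))) =
    vconj p (vconj q (vconj p (vconj r (vconj q t))))"
    using assms vconj_commute[of p r] by simp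
  also have "\<dots> = vconj q (vconj p (vconj q (vconj r (vconj q t))))"
    using assms vconj_braid[of p] by simp
  also have "\<dots> = vconj q (vconj p (vconj r (vconj q (vconj r t))))"
    using assms vconj_braid[of q] by simp
  also have "\<dots> = vconj q (vconj r (vconj p (vconj q t)))"
    using assms vconj_commute[of p r] by simp
  finally show ?thesis .
qed

lemma vconj_preserves_commute:
  "1 \<le> i \<Longrightarrow> i + 1 \<le> n \<Longrightarrow> x \<in> carrier G \<Longrightarrow> y \<in> carrier G \<Longrightarrow> x \<otimes> y = y \<otimes> x \<Longrightarrow>
   vconj i x \<otimes> vconj i y = vconj i y \<otimes> vconj i x"
  by (metis vconj_mult)

lemma vconj_preserves_braid:
  "1 \<le> i \<Longrightarrow> i + 1 \<le> n \<Longrightarrow> x \<in> carrier G \<Longrightarrow> y \<in> carrier G \<Longrightarrow> x \<otimes> y \<otimes> x = y \<otimes> x \<otimes> y \<Longrightarrow>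
   vconj i x \<otimes> vconj i y \<otimes> vconj i x = vconj i y \<otimes> vconj i x \<otimes> vconj i y"
  by (metis vconj_mult m_closed)

text \<open>From \<open>v\<^sub>i \<sigma>\<^sub>i\<^sub>+\<^sub>1 v\<^sub>i = v\<^sub>i\<^sub>+\<^sub>1 \<sigma>\<^sub>i v\<^sub>i\<^sub>+\<^sub>1\<close> and \<open>b\<^sub>i v\<^sub>i = v\<^sub>i b\<^sub>i\<^sub>+\<^sub>1\<close>:
  \<open>sig_shift \<sigma>\<^sub>1 i\<close> is \<open>\<sigma>\<^sub>i\<^sub>+\<^sub>1\<close> and \<open>bar_shift b\<^sub>1 i\<close> is \<open>b\<^sub>i\<^sub>+\<^sub>1\<close>.\<close>

primrec sig_shift :: "'a \<Rightarrow> nat \<Rightarrow> 'a" where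
  "sig_shift x 0 = x"
| "sig_shift x (Suc i) = vconj (Suc i) (vconj (Suc (Suc i)) (sig_shift x i))"

primrec bar_shift :: "'a \<Rightarrow> nat \<Rightarrow> 'a" where
  "bar_shift x 0 = x"
| "bar_shift x (Suc i) = vconj (Suc i) (bar_shift x i)"

lemma sig_shift_closed [simp]: "x \<in> carrier G \<Longrightarrow> sig_shift x i \<in> carrier G"
  by (induction i) auto

lemma bar_shift_closed [simp]: "x \<in> carrier G \<Longrightarrow> bar_shift x i \<in> carrier G"
  by (induction i) auto

lemma word_eval_v_word_commute:
  assumes f: "f \<in> UNIV \<rightarrow> carrier G" "\<And>k. f (TVir k) = V k"
    and ks: "\<forall>k\<in>set ks. 1 \<le> k \<and> k + 2 \<le> j" and j: "j + 1 \<le> n"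
  shows "word_eval G f (concat (map v ks)) \<otimes> V j = V j \<otimes> word_eval G f (concat (map v ks))"
  using ks
proof (induction ks)
  case (Cons k ks)
  let ?w = "word_eval G f (concat (map v ks))"
  have w: "?w \<in> carrier G"
    using f(1) by simp
  have "V k \<otimes> ?w \<otimes> V j = V k \<otimes> (V j \<otimes> ?w)"
    using Cons w by (simp add: m_assoc)
  also have "\<dots> = (V k \<otimes> V j) \<otimes> ?w"
    using w by (simp add: m_assoc)
  also have "\<dots> = V j \<otimes> (V k \<otimes> ?w)"
    using Cons j w V_commute[of k j] by (simp add: m_assoc)
  finally show ?case
    by (simp add: f(2))
qed simp

lemma word_eval_sig_word:
  assumes f: "f \<in> UNIV \<rightarrow> carrier G" "\<And>k. f (TVir k) = V k" and i: "i + 2 \<le> n"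
  shows "word_eval G f (sig_word i) = sig_shift (f (TSig 1)) i"
  using i
proof (induction i)
  case 0
  then show ?case using f(1) by (simp add: sig_word_def vdown_def vup_def s_def Pi_iff)
next
  case (Suc i)
  let ?ev = "word_eval G f" and ?j = "Suc (Suc i)"
  let ?a = "?ev (vdown i 1)" and ?d = "?ev (vup 1 i)"
  have closed: "?ev w \<in> carrier G" for w using f(1) by simp
  have split: "sig_word (Suc i) =
    v (Suc i) @ vdown i 1 @ v ?j @ vdown (Suc i) 2 @ s 1 @ vup 2 (Suc i) @ v ?j @ vup 1 i @ v (Suc i)"
    by (simp add: sig_word_def vdown_def vup_def)
  have comm: "?a \<otimes> V ?j = V ?j \<otimes> ?a" "V ?j \<otimes> ?d = ?d \<otimes> V ?j"
    unfolding vdown_def vup_def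
    by (intro word_eval_v_word_commute[symmetric] word_eval_v_word_commute f; use Suc.prems in auto)+
  have "?ev (sig_word (Suc i)) =
    V (Suc i) \<otimes> (?a \<otimes> V ?j) \<otimes> ?ev (vdown (Suc i) 2) \<otimes> f (TSig 1) \<otimes> ?ev (vup 2 (Suc i))
      \<otimes> (V ?j \<otimes> ?d) \<otimes> V (Suc i)"
    unfolding split using f(1) by (simp add: word_eval_append[OF f(1)] f(2) v_def m_assoc Pi_iff closed)
  also have "\<dots> = V (Suc i) \<otimes> (V ?j \<otimes> ?a) \<otimes> ?ev (vdown (Suc i) 2) \<otimes> f (TSig 1) \<otimes> ?ev (vup 2 (Suc i))
      \<otimes> (?d \<otimes> V ?j) \<otimes> V (Suc i)"
    by (simp only: comm)
  also have "\<dots> = vconj (Suc i) (vconj ?j (?ev (sig_word i)))"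
    unfolding sig_word_def[of i] using f(1)
    by (simp add: word_eval_append[OF f(1)] vconj_def m_assoc Pi_iff closed)
  finally show ?case using Suc by simp
qed

lemma word_eval_bar_word:
  assumes f: "f \<in> UNIV \<rightarrow> carrier G" "\<And>k. f (TVir k) = V k"
  shows "word_eval G f (bar_word i) = bar_shift (f (TBar 1)) i"
proof (induction i)
  case 0
  then show ?case using f(1) by (simp add: bar_word_def vdown_def vup_def b_def Pi_iff)
next
  case (Suc i)
  have "bar_word (Suc i) = v (Suc i) @ bar_word i @ v (Suc i)"
    by (simp add: bar_word_def vdown_def vup_def)
  then show ?case
    using Suc f by (simp add: word_eval_append[OF f(1)] vconj_def m_assoc Pi_iff v_def)
qed

end

locale red_relations = sym_gens +
  fixes \<sigma> \<beta>
  assumes sigma_closed [simp]: "\<sigma> \<in> carrier G" and beta_closed [simp]: "\<beta> \<in> carrier G"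
    and sigma_commute_V: "3 \<le> j \<Longrightarrow> j + 1 \<le> n \<Longrightarrow> \<sigma> \<otimes> V j = V j \<otimes> \<sigma>"
    and beta_involution: "\<beta> \<otimes> \<beta> = \<one>"
    and beta_commute_V: "2 \<le> j \<Longrightarrow> j + 1 \<le> n \<Longrightarrow> \<beta> \<otimes> V j = V j \<otimes> \<beta>"
    and sigma_braid: "vconj 1 \<sigma> \<otimes> vconj 2 \<sigma> \<otimes> vconj 1 \<sigma> = vconj 2 \<sigma> \<otimes> vconj 1 \<sigma> \<otimes> vconj 2 \<sigma>"
    and sigma_commute_far:
      "\<sigma> \<otimes> vconj 2 (vconj 3 (vconj 1 (vconj 2 \<sigma>))) = vconj 2 (vconj 3 (vconj 1 (vconj 2 \<sigma>))) \<otimes> \<sigma>"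
    and beta_commute: "\<beta> \<otimes> vconj 1 \<beta> = vconj 1 \<beta> \<otimes> \<beta>"
    and sigma_beta_commute: "\<sigma> \<otimes> vconj 2 (vconj 1 \<beta>) = vconj 2 (vconj 1 \<beta>) \<otimes> \<sigma>"
    and beta_twist: "vconj 1 \<beta> \<otimes> \<beta> \<otimes> \<sigma> \<otimes> \<beta> \<otimes> vconj 1 \<beta> = vconj 1 \<sigma>"

locale tb_relations = sym_gens +
  fixes S B
  assumes S_closed [simp]: "S i \<in> carrier G" and B_closed [simp]: "B i \<in> carrier G"
    and S_braid: "1 \<le> i \<Longrightarrow> i + 2 \<le> n \<Longrightarrow> S i \<otimes> S (i + 1) \<otimes> S i = S (i + 1) \<otimes> S i \<otimes> S (i + 1)"
    and S_commute: "1 \<le> i \<Longrightarrow> i + 2 \<le> j \<Longrightarrow> j + 1 \<le> n \<Longrightarrow> S i \<otimes> S j = S j \<otimes> S i"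
    and B_involution: "1 \<le> i \<Longrightarrow> i \<le> n \<Longrightarrow> B i \<otimes> B i = \<one>"
    and B_commute: "1 \<le> i \<Longrightarrow> i < j \<Longrightarrow> j \<le> n \<Longrightarrow> B i \<otimes> B j = B j \<otimes> B i"
    and S_commute_V: "1 \<le> i \<Longrightarrow> i + 1 \<le> n \<Longrightarrow> 1 \<le> j \<Longrightarrow> j + 1 \<le> n \<Longrightarrow> i + 2 \<le> j \<or> j + 2 \<le> i \<Longrightarrow>
      S i \<otimes> V j = V j \<otimes> S i"
    and V_S_V: "1 \<le> i \<Longrightarrow> i + 2 \<le> n \<Longrightarrow> V i \<otimes> S (i + 1) \<otimes> V i = V (i + 1) \<otimes> S i \<otimes> V (i + 1)"
    and B_V: "1 \<le> i \<Longrightarrow> i + 1 \<le> n \<Longrightarrow> B i \<otimes> V i = V i \<otimes> B (i + 1)"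
    and B_S_twist: "1 \<le> i \<Longrightarrow> i + 1 \<le> n \<Longrightarrow> B i \<otimes> B (i + 1) \<otimes> S i \<otimes> B (i + 1) \<otimes> B i = V i \<otimes> S i \<otimes> V i"
    and B_commute_V: "1 \<le> i \<Longrightarrow> i \<le> n \<Longrightarrow> 1 \<le> j \<Longrightarrow> j + 1 \<le> n \<Longrightarrow> i < j \<or> j + 1 < i \<Longrightarrow>
      B i \<otimes> V j = V j \<otimes> B i"
    and B_commute_S: "1 \<le> i \<Longrightarrow> i \<le> n \<Longrightarrow> 1 \<le> j \<Longrightarrow> j + 1 \<le> n \<Longrightarrow> i < j \<or> j + 1 < i \<Longrightarrow>
      B i \<otimes> S j = S j \<otimes> B i"

section \<open>The reduced relations imply the twisted braid relations\<close>

context red_relations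
begin

lemma vconj_sigma: "3 \<le> j \<Longrightarrow> j + 1 \<le> n \<Longrightarrow> vconj j \<sigma> = \<sigma>"
  by (simp add: vconj_eq_iff_commute sigma_commute_V)

lemma vconj_beta: "2 \<le> j \<Longrightarrow> j + 1 \<le> n \<Longrightarrow> vconj j \<beta> = \<beta>"
  by (simp add: vconj_eq_iff_commute beta_commute_V)

lemma vconj_sig_shift_above: "i + 3 \<le> j \<Longrightarrow> j + 1 \<le> n \<Longrightarrow> vconj j (sig_shift \<sigma> i) = sig_shift \<sigma> i"
proof (induction i)
  case 0
  then show ?case by (simp add: vconj_sigma)
next
  case (Suc i)
  then show ?case
    using vconj_commute[of "Suc i" j, symmetric] vconj_commute[of "Suc (Suc i)" j, symmetric] by simp
qed

lemma vconj_sig_shift_below: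
  "1 \<le> j \<Longrightarrow> j + 1 \<le> i \<Longrightarrow> i + 2 \<le> n \<Longrightarrow> vconj j (sig_shift \<sigma> i) = sig_shift \<sigma> i"
proof (induction i arbitrary: j)
  case 0
  then show ?case by simp
next
  case (Suc i)
  show ?case
  proof (cases "j < i")
    case True
    then have "vconj j (sig_shift \<sigma> (Suc i)) =
      vconj (Suc i) (vconj (Suc (Suc i)) (vconj j (sig_shift \<sigma> i)))"
      using Suc.prems vconj_commute[of j "Suc i"] vconj_commute[of j "Suc (Suc i)"] by simp
    then show ?thesis using Suc True by simp
  next
    case False
    then obtain k where "i = Suc k" "j = i" using Suc.prems by (cases i) auto
    moreover have "vconj (Suc (Suc (Suc k))) (sig_shift \<sigma> k) = sig_shift \<sigma> k"
      using Suc.prems \<open>i = Suc k\<close> by (intro vconj_sig_shift_above) auto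
    ultimately show ?thesis
      using Suc.prems by (simp add: vconj_fixes_conjugate)
  qed
qed

lemma sig_shift_braid:
  "i + 3 \<le> n \<Longrightarrow> sig_shift \<sigma> i \<otimes> sig_shift \<sigma> (Suc i) \<otimes> sig_shift \<sigma> i =
    sig_shift \<sigma> (Suc i) \<otimes> sig_shift \<sigma> i \<otimes> sig_shift \<sigma> (Suc i)"
proof (induction i)
  case 0
  have "vconj 1 (vconj 1 \<sigma>) \<otimes> vconj 1 (vconj 2 \<sigma>) \<otimes> vconj 1 (vconj 1 \<sigma>) =
    vconj 1 (vconj 2 \<sigma>) \<otimes> vconj 1 (vconj 1 \<sigma>) \<otimes> vconj 1 (vconj 2 \<sigma>)"
    using sigma_braid 0 by (intro vconj_preserves_braid) auto
  then show ?case using 0 by (simp add: vconj_vconj numeral_eq_Suc)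
next
  case (Suc i)
  let ?f = "\<lambda>x. vconj (Suc i) (vconj (Suc (Suc i)) (vconj (Suc (Suc (Suc i))) x))"
  have "?f (sig_shift \<sigma> i) \<otimes> ?f (sig_shift \<sigma> (Suc i)) \<otimes> ?f (sig_shift \<sigma> i) =
    ?f (sig_shift \<sigma> (Suc i)) \<otimes> ?f (sig_shift \<sigma> i) \<otimes> ?f (sig_shift \<sigma> (Suc i))"
    using Suc by (intro vconj_preserves_braid) auto
  moreover have "?f (sig_shift \<sigma> i) = sig_shift \<sigma> (Suc i)"
    using Suc.prems by (simp add: vconj_sig_shift_above)
  moreover have "?f (sig_shift \<sigma> (Suc i)) = sig_shift \<sigma> (Suc (Suc i))"
    using Suc.prems vconj_sig_shift_below[of "Suc i" "Suc (Suc i)"] by simp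
  ultimately show ?case by simp
qed

lemma sigma_commute_sig_shift: "2 \<le> j \<Longrightarrow> j + 2 \<le> n \<Longrightarrow> \<sigma> \<otimes> sig_shift \<sigma> j = sig_shift \<sigma> j \<otimes> \<sigma>"
proof (induction j)
  case 0
  then show ?case by simp
next
  case (Suc j)
  show ?case
  proof (cases "j = 1")
    case True
    then show ?thesis using sigma_commute_far by (simp add: numeral_eq_Suc)
  next
    case False
    then have j: "2 \<le> j" using Suc.prems by simp
    have "vconj (Suc j) (vconj (Suc (Suc j)) \<sigma>) \<otimes> vconj (Suc j) (vconj (Suc (Suc j)) (sig_shift \<sigma> j)) =
      vconj (Suc j) (vconj (Suc (Suc j)) (sig_shift \<sigma> j)) \<otimes> vconj (Suc j) (vconj (Suc (Suc j)) \<sigma>)"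
      using Suc j by (intro vconj_preserves_commute) auto
    moreover have "vconj (Suc j) (vconj (Suc (Suc j)) \<sigma>) = \<sigma>"
      using j Suc.prems by (simp add: vconj_sigma)
    ultimately show ?thesis by simp
  qed
qed

lemma sig_shift_commute:
  "i + 2 \<le> j \<Longrightarrow> j + 2 \<le> n \<Longrightarrow> sig_shift \<sigma> i \<otimes> sig_shift \<sigma> j = sig_shift \<sigma> j \<otimes> sig_shift \<sigma> i"
proof (induction i arbitrary: j)
  case 0
  then show ?case by (simp add: sigma_commute_sig_shift)
next
  case (Suc i)
  have "vconj (Suc i) (vconj (Suc (Suc i)) (sig_shift \<sigma> i)) \<otimes>
      vconj (Suc i) (vconj (Suc (Suc i)) (sig_shift \<sigma> j)) =
    vconj (Suc i) (vconj (Suc (Suc i)) (sig_shift \<sigma> j)) \<otimes>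
      vconj (Suc i) (vconj (Suc (Suc i)) (sig_shift \<sigma> i))"
    using Suc by (intro vconj_preserves_commute) auto
  moreover have "vconj (Suc i) (vconj (Suc (Suc i)) (sig_shift \<sigma> j)) = sig_shift \<sigma> j"
    using Suc.prems by (simp add: vconj_sig_shift_below)
  ultimately show ?case by simp
qed

lemma bar_shift_involution: "i + 1 \<le> n \<Longrightarrow> bar_shift \<beta> i \<otimes> bar_shift \<beta> i = \<one>"
proof (induction i)
  case 0
  then show ?case by (simp add: beta_involution)
next
  case (Suc i)
  then show ?case using vconj_mult[of "Suc i" "bar_shift \<beta> i" "bar_shift \<beta> i"] by (simp add: vconj_one)
qed

lemma vconj_bar_shift_above: "i + 2 \<le> j \<Longrightarrow> j + 1 \<le> n \<Longrightarrow> vconj j (bar_shift \<beta> i) = bar_shift \<beta> i"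
proof (induction i)
  case 0
  then show ?case by (simp add: vconj_beta)
next
  case (Suc i)
  then show ?case using vconj_commute[of "Suc i" j, symmetric] by simp
qed

lemma vconj_bar_shift_below:
  "1 \<le> j \<Longrightarrow> j + 1 \<le> i \<Longrightarrow> i + 1 \<le> n \<Longrightarrow> vconj j (bar_shift \<beta> i) = bar_shift \<beta> i"
proof (induction i arbitrary: j)
  case 0
  then show ?case by simp
next
  case (Suc i)
  show ?case
  proof (cases "j < i")
    case True
    then show ?thesis using Suc vconj_commute[of j "Suc i"] by simp
  next
    case False
    then obtain k where k: "i = Suc k" "j = i" using Suc.prems by (cases i) auto
    have "vconj (Suc (Suc k)) (bar_shift \<beta> k) = bar_shift \<beta> k"
      using Suc.prems k by (intro vconj_bar_shift_above) auto
    then show ?thesis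
      using Suc.prems k vconj_braid[of "Suc k" "vconj (Suc (Suc k)) (bar_shift \<beta> k)"] by simp
  qed
qed

lemma beta_commute_bar_shift: "1 \<le> j \<Longrightarrow> j + 1 \<le> n \<Longrightarrow> \<beta> \<otimes> bar_shift \<beta> j = bar_shift \<beta> j \<otimes> \<beta>"
proof (induction j)
  case 0
  then show ?case by simp
next
  case (Suc j)
  show ?case
  proof (cases "j = 0")
    case True
    then show ?thesis using beta_commute by simp
  next
    case False
    have "vconj (Suc j) \<beta> \<otimes> vconj (Suc j) (bar_shift \<beta> j) =
      vconj (Suc j) (bar_shift \<beta> j) \<otimes> vconj (Suc j) \<beta>"
      using Suc False by (intro vconj_preserves_commute) auto
    moreover have "vconj (Suc j) \<beta> = \<beta>"
      using False Suc.prems by (simp add: vconj_beta)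
    ultimately show ?thesis by simp
  qed
qed

lemma bar_shift_commute:
  "i < j \<Longrightarrow> j + 1 \<le> n \<Longrightarrow> bar_shift \<beta> i \<otimes> bar_shift \<beta> j = bar_shift \<beta> j \<otimes> bar_shift \<beta> i"
proof (induction i arbitrary: j)
  case 0
  then show ?case by (simp add: beta_commute_bar_shift)
next
  case (Suc i)
  have "vconj (Suc i) (bar_shift \<beta> i) \<otimes> vconj (Suc i) (bar_shift \<beta> j) =
    vconj (Suc i) (bar_shift \<beta> j) \<otimes> vconj (Suc i) (bar_shift \<beta> i)"
    using Suc by (intro vconj_preserves_commute) auto
  moreover have "vconj (Suc i) (bar_shift \<beta> j) = bar_shift \<beta> j"
    using Suc.prems by (simp add: vconj_bar_shift_below)
  ultimately show ?case by simp
qed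

lemma bar_shift_twist:
  "k + 2 \<le> n \<Longrightarrow> bar_shift \<beta> k \<otimes> bar_shift \<beta> (Suc k) \<otimes> sig_shift \<sigma> k \<otimes> bar_shift \<beta> (Suc k) \<otimes> bar_shift \<beta> k
    = vconj (Suc k) (sig_shift \<sigma> k)"
proof (induction k)
  case 0
  have "\<beta> \<otimes> vconj 1 \<beta> \<otimes> \<sigma> \<otimes> vconj 1 \<beta> \<otimes> \<beta> = (\<beta> \<otimes> vconj 1 \<beta>) \<otimes> \<sigma> \<otimes> (vconj 1 \<beta> \<otimes> \<beta>)"
    by (simp add: m_assoc)
  also have "\<dots> = (vconj 1 \<beta> \<otimes> \<beta>) \<otimes> \<sigma> \<otimes> (\<beta> \<otimes> vconj 1 \<beta>)"
    by (simp only: beta_commute)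
  also have "\<dots> = vconj 1 \<sigma>"
    using beta_twist by (simp add: m_assoc)
  finally show ?case by simp
next
  case (Suc k)
  define f where "f x = vconj (Suc k) (vconj (Suc (Suc k)) x)" for x
  have f_mult: "f (x \<otimes> y) = f x \<otimes> f y" if "x \<in> carrier G" "y \<in> carrier G" for x y
    unfolding f_def using that Suc.prems by (simp add: vconj_mult)
  have "f (bar_shift \<beta> k) \<otimes> f (bar_shift \<beta> (Suc k)) \<otimes> f (sig_shift \<sigma> k) \<otimes>
      f (bar_shift \<beta> (Suc k)) \<otimes> f (bar_shift \<beta> k)
    = f (vconj (Suc k) (sig_shift \<sigma> k))"
    using arg_cong[OF Suc.IH, of f] Suc.prems by (simp add: f_mult del: bar_shift.simps sig_shift.simps)
  moreover have "f (bar_shift \<beta> k) = bar_shift \<beta> (Suc k)"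
    unfolding f_def using Suc.prems by (simp add: vconj_bar_shift_above)
  moreover have "f (bar_shift \<beta> (Suc k)) = bar_shift \<beta> (Suc (Suc k))"
    unfolding f_def using Suc.prems vconj_braid[of "Suc k" "bar_shift \<beta> k"]
    by (simp add: vconj_bar_shift_above)
  moreover have "f (sig_shift \<sigma> k) = sig_shift \<sigma> (Suc k)"
    unfolding f_def by simp
  moreover have "f (vconj (Suc k) (sig_shift \<sigma> k)) = vconj (Suc (Suc k)) (sig_shift \<sigma> (Suc k))"
    unfolding f_def using Suc.prems vconj_braid[of "Suc k" "sig_shift \<sigma> k"] by simp
  ultimately show ?case by simp
qed

lemma sigma_commute_bar_shift: "2 \<le> i \<Longrightarrow> i + 1 \<le> n \<Longrightarrow> bar_shift \<beta> i \<otimes> \<sigma> = \<sigma> \<otimes> bar_shift \<beta> i"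
proof (induction i)
  case 0
  then show ?case by simp
next
  case (Suc i)
  show ?case
  proof (cases "i = 1")
    case True
    then show ?thesis using sigma_beta_commute by (simp add: numeral_eq_Suc)
  next
    case False
    then have i: "2 \<le> i" using Suc.prems by simp
    have "vconj (Suc i) (bar_shift \<beta> i) \<otimes> vconj (Suc i) \<sigma> =
      vconj (Suc i) \<sigma> \<otimes> vconj (Suc i) (bar_shift \<beta> i)"
      using Suc i by (intro vconj_preserves_commute) auto
    moreover have "vconj (Suc i) \<sigma> = \<sigma>"
      using i Suc.prems by (simp add: vconj_sigma)
    ultimately show ?thesis by simp
  qed
qed

lemma bar_shift_commute_sig_shift_below:
  "j + 2 \<le> i \<Longrightarrow> i + 1 \<le> n \<Longrightarrow> bar_shift \<beta> i \<otimes> sig_shift \<sigma> j = sig_shift \<sigma> j \<otimes> bar_shift \<beta> i"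
proof (induction j arbitrary: i)
  case 0
  then show ?case by (simp add: sigma_commute_bar_shift)
next
  case (Suc j)
  have "vconj (Suc j) (vconj (Suc (Suc j)) (bar_shift \<beta> i)) \<otimes>
      vconj (Suc j) (vconj (Suc (Suc j)) (sig_shift \<sigma> j)) =
    vconj (Suc j) (vconj (Suc (Suc j)) (sig_shift \<sigma> j)) \<otimes>
      vconj (Suc j) (vconj (Suc (Suc j)) (bar_shift \<beta> i))"
    using Suc by (intro vconj_preserves_commute) auto
  moreover have "vconj (Suc j) (vconj (Suc (Suc j)) (bar_shift \<beta> i)) = bar_shift \<beta> i"
    using Suc.prems by (simp add: vconj_bar_shift_below)
  ultimately show ?case by simp
qed

lemma beta_commute_sig_shift: "1 \<le> j \<Longrightarrow> j + 2 \<le> n \<Longrightarrow> \<beta> \<otimes> sig_shift \<sigma> j = sig_shift \<sigma> j \<otimes> \<beta>"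
proof (induction j)
  case 0
  then show ?case by simp
next
  case (Suc j)
  show ?case
  proof (cases "j = 0")
    case True
    have "vconj 1 (vconj 2 \<sigma>) \<otimes> vconj 1 (vconj 2 (vconj 2 (vconj 1 \<beta>))) =
      vconj 1 (vconj 2 (vconj 2 (vconj 1 \<beta>))) \<otimes> vconj 1 (vconj 2 \<sigma>)"
      using sigma_beta_commute Suc.prems True by (intro vconj_preserves_commute) auto
    moreover have "vconj 1 (vconj 2 (vconj 2 (vconj 1 \<beta>))) = \<beta>"
      using Suc.prems True by (simp add: vconj_vconj)
    ultimately show ?thesis using True by (simp add: numeral_eq_Suc)
  next
    case False
    have "vconj (Suc j) (vconj (Suc (Suc j)) \<beta>) \<otimes> vconj (Suc j) (vconj (Suc (Suc j)) (sig_shift \<sigma> j)) =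
      vconj (Suc j) (vconj (Suc (Suc j)) (sig_shift \<sigma> j)) \<otimes> vconj (Suc j) (vconj (Suc (Suc j)) \<beta>)"
      using Suc False by (intro vconj_preserves_commute) auto
    moreover have "vconj (Suc j) (vconj (Suc (Suc j)) \<beta>) = \<beta>"
      using False Suc.prems by (simp add: vconj_beta)
    ultimately show ?thesis by simp
  qed
qed

lemma bar_shift_commute_sig_shift_above:
  "i + 1 \<le> j \<Longrightarrow> j + 2 \<le> n \<Longrightarrow> bar_shift \<beta> i \<otimes> sig_shift \<sigma> j = sig_shift \<sigma> j \<otimes> bar_shift \<beta> i"
proof (induction i arbitrary: j)
  case 0
  then show ?case by (simp add: beta_commute_sig_shift)
next
  case (Suc i)
  have "vconj (Suc i) (bar_shift \<beta> i) \<otimes> vconj (Suc i) (sig_shift \<sigma> j) =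
    vconj (Suc i) (sig_shift \<sigma> j) \<otimes> vconj (Suc i) (bar_shift \<beta> i)"
    using Suc by (intro vconj_preserves_commute) auto
  moreover have "vconj (Suc i) (sig_shift \<sigma> j) = sig_shift \<sigma> j"
    using Suc.prems by (simp add: vconj_sig_shift_below)
  ultimately show ?case by simp
qed

lemma tb_relations_shift:
  "tb_relations G n V (\<lambda>i. sig_shift \<sigma> (i - 1)) (\<lambda>i. bar_shift \<beta> (i - 1))"
proof unfold_locales
  fix i j
  show "sig_shift \<sigma> (i - 1) \<otimes> sig_shift \<sigma> (i + 1 - 1) \<otimes> sig_shift \<sigma> (i - 1) =
    sig_shift \<sigma> (i + 1 - 1) \<otimes> sig_shift \<sigma> (i - 1) \<otimes> sig_shift \<sigma> (i + 1 - 1)"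
    if "1 \<le> i" "i + 2 \<le> n"
    using that sig_shift_braid[of "i - 1"] by (cases i) auto
  show "sig_shift \<sigma> (i - 1) \<otimes> sig_shift \<sigma> (j - 1) = sig_shift \<sigma> (j - 1) \<otimes> sig_shift \<sigma> (i - 1)"
    if "1 \<le> i" "i + 2 \<le> j" "j + 1 \<le> n"
    using that by (intro sig_shift_commute) auto
  show "bar_shift \<beta> (i - 1) \<otimes> bar_shift \<beta> (i - 1) = \<one>" if "1 \<le> i" "i \<le> n"
    using that by (intro bar_shift_involution) auto
  show "bar_shift \<beta> (i - 1) \<otimes> bar_shift \<beta> (j - 1) = bar_shift \<beta> (j - 1) \<otimes> bar_shift \<beta> (i - 1)"
    if "1 \<le> i" "i < j" "j \<le> n"
    using that by (intro bar_shift_commute) auto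
  show "sig_shift \<sigma> (i - 1) \<otimes> V j = V j \<otimes> sig_shift \<sigma> (i - 1)"
    if "1 \<le> i" "i + 1 \<le> n" "1 \<le> j" "j + 1 \<le> n" "i + 2 \<le> j \<or> j + 2 \<le> i"
    using that vconj_sig_shift_above[of "i - 1" j] vconj_sig_shift_below[of j "i - 1"]
    by (auto simp flip: vconj_eq_iff_commute)
  show "V i \<otimes> sig_shift \<sigma> (i + 1 - 1) \<otimes> V i = V (i + 1) \<otimes> sig_shift \<sigma> (i - 1) \<otimes> V (i + 1)"
    if "1 \<le> i" "i + 2 \<le> n"
    using that vconj_vconj[of i "vconj (i + 1) (sig_shift \<sigma> (i - 1))"]
    by (cases i) (auto simp: vconj_def)
  show "bar_shift \<beta> (i - 1) \<otimes> V i = V i \<otimes> bar_shift \<beta> (i + 1 - 1)" if "1 \<le> i" "i + 1 \<le> n"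
    using that V_involution[of i] by (cases i) (auto simp: vconj_def simp flip: m_assoc)
  show "bar_shift \<beta> (i - 1) \<otimes> bar_shift \<beta> (i + 1 - 1) \<otimes> sig_shift \<sigma> (i - 1) \<otimes> bar_shift \<beta> (i + 1 - 1)
      \<otimes> bar_shift \<beta> (i - 1) = V i \<otimes> sig_shift \<sigma> (i - 1) \<otimes> V i"
    if "1 \<le> i" "i + 1 \<le> n"
    using that bar_shift_twist[of "i - 1"] by (cases i) (auto simp: vconj_def)
  show "bar_shift \<beta> (i - 1) \<otimes> V j = V j \<otimes> bar_shift \<beta> (i - 1)"
    if "1 \<le> i" "i \<le> n" "1 \<le> j" "j + 1 \<le> n" "i < j \<or> j + 1 < i"
    using that vconj_bar_shift_above[of "i - 1" j] vconj_bar_shift_below[of j "i - 1"]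
    by (auto simp flip: vconj_eq_iff_commute)
  show "bar_shift \<beta> (i - 1) \<otimes> sig_shift \<sigma> (j - 1) = sig_shift \<sigma> (j - 1) \<otimes> bar_shift \<beta> (i - 1)"
    if "1 \<le> i" "i \<le> n" "1 \<le> j" "j + 1 \<le> n" "i < j \<or> j + 1 < i"
    using that bar_shift_commute_sig_shift_below[of "j - 1" "i - 1"]
      bar_shift_commute_sig_shift_above[of "i - 1" "j - 1"]
    by auto
qed simp_all

end

section \<open>The twisted braid relations imply the reduced relations\<close>

context tb_relations
begin

lemma S_Suc: "1 \<le> i \<Longrightarrow> i + 2 \<le> n \<Longrightarrow> S (Suc i) = vconj i (vconj (Suc i) (S i))"
  using V_S_V[of i] vconj_vconj[of i "S (Suc i)"] by (simp add: vconj_def)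

lemma B_Suc: "1 \<le> i \<Longrightarrow> i + 1 \<le> n \<Longrightarrow> B (Suc i) = vconj i (B i)"
  using B_V[of i] V_involution[of i] by (simp add: vconj_def m_assoc flip: m_assoc[of "V i" "V i"])

lemma sig_shift_S: "i + 2 \<le> n \<Longrightarrow> sig_shift (S 1) i = S (Suc i)"
  by (induction i) (simp_all add: S_Suc)

lemma bar_shift_B: "i + 1 \<le> n \<Longrightarrow> bar_shift (B 1) i = B (Suc i)"
  by (induction i) (simp_all add: B_Suc)

lemma red_relations_S1_B1:
  assumes "4 \<le> n"
  shows "red_relations G n V (S 1) (B 1)"
proof -
  have S2: "S 2 = vconj 1 (vconj 2 (S 1))" and S3: "S 3 = vconj 2 (vconj 3 (S 2))"
    using assms S_Suc[of 1] S_Suc[of 2] by (simp_all add: numeral_eq_Suc)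
  have B2: "B 2 = vconj 1 (B 1)" and B3: "B 3 = vconj 2 (B 2)"
    using assms B_Suc[of 1] B_Suc[of 2] by (simp_all add: numeral_eq_Suc)
  have "vconj 2 (S 1) = vconj 1 (S 2)"
    using assms by (simp add: S2 vconj_vconj)
  moreover have "S 1 \<otimes> S 2 \<otimes> S 1 = S 2 \<otimes> S 1 \<otimes> S 2"
    using assms S_braid[of 1] by (simp add: numeral_2_eq_2)
  ultimately have
    "vconj 1 (S 1) \<otimes> vconj 2 (S 1) \<otimes> vconj 1 (S 1) = vconj 2 (S 1) \<otimes> vconj 1 (S 1) \<otimes> vconj 2 (S 1)"
    using assms by (simp add: vconj_preserves_braid)
  moreover have "vconj 1 (B 1) \<otimes> B 1 \<otimes> S 1 \<otimes> B 1 \<otimes> vconj 1 (B 1) = vconj 1 (S 1)"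
  proof -
    have "B 2 \<otimes> B 1 \<otimes> S 1 \<otimes> B 1 \<otimes> B 2 = (B 1 \<otimes> B 2) \<otimes> S 1 \<otimes> (B 2 \<otimes> B 1)"
      using assms B_commute[of 1 2] by (simp add: m_assoc)
    also have "\<dots> = vconj 1 (S 1)"
      using assms B_S_twist[of 1] by (simp add: vconj_def m_assoc numeral_2_eq_2)
    finally show ?thesis by (simp add: B2)
  qed
  moreover have "S 1 \<otimes> V j = V j \<otimes> S 1" if "3 \<le> j" "j + 1 \<le> n" for j
    using that by (intro S_commute_V) auto
  moreover have "B 1 \<otimes> V j = V j \<otimes> B 1" if "2 \<le> j" "j + 1 \<le> n" for j
    using that by (intro B_commute_V) auto
  ultimately show ?thesis
    using assms S_commute[of 1 3] B_commute[of 1 2] B_commute_S[of 3 1] B_involution[of 1]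
    by unfold_locales (simp_all add: S3 S2 B3 B2)
qed

end

lemma le_diff_iff_add_le: "0 < i \<Longrightarrow> i \<le> n - k \<longleftrightarrow> i + k \<le> (n::nat)"
  by arith

definition virtual_rels :: "nat \<Rightarrow> (tbgen word \<times> tbgen word) set" where
  "virtual_rels n =
     {(v i @ v i, []) | i. 1 \<le> i \<and> i \<le> n - 1}
   \<union> {(v i @ v j, v j @ v i) | i j.
        1 \<le> i \<and> i \<le> n - 1 \<and> 1 \<le> j \<and> j \<le> n - 1 \<and> (i + 2 \<le> j \<or> j + 2 \<le> i)}
   \<union> {(v i @ v (i+1) @ v i, v (i+1) @ v i @ v (i+1)) | i. 1 \<le> i \<and> i \<le> n - 2}"

lemma virtual_rels_subset: "virtual_rels n \<subseteq> tb_rels n" "virtual_rels n \<subseteq> red_rels n"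
  by (auto simp: virtual_rels_def tb_rels_def red_rels_def)

lemma satisfies_rels_subset: "satisfies_rels H f R \<Longrightarrow> R' \<subseteq> R \<Longrightarrow> satisfies_rels H f R'"
  by (auto simp: satisfies_rels_def)

lemma sym_gens_of_satisfies:
  assumes "group H" and f: "f \<in> UNIV \<rightarrow> carrier H" and sat: "satisfies_rels H f (virtual_rels n)"
  shows "sym_gens H n (\<lambda>i. f (TVir i))"
proof -
  interpret group H by (rule assms(1))
  have rel: "word_eval H f l = word_eval H f r" if "(l, r) \<in> virtual_rels n" for l r
    using sat that by (auto simp: satisfies_rels_def)
  note eval = v_def m_assoc virtual_rels_def le_diff_iff_add_le
  show ?thesis
    apply unfold_locales
    subgoal using f by auto
    subgoal for i using f rel[of "v i @ v i" "[]"] by (simp add: eval Pi_iff)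
    subgoal for i j using f rel[of "v i @ v j" "v j @ v i"] by (simp add: eval Pi_iff)
    subgoal for i
      using f rel[of "v i @ v (i + 1) @ v i" "v (i + 1) @ v i @ v (i + 1)"] by (simp add: eval Pi_iff)
    done
qed

lemma satisfies_tb_rels_of_tb_relations:
  assumes "tb_relations H n (\<lambda>i. f (TVir i)) (\<lambda>i. f (TSig i)) (\<lambda>i. f (TBar i))"
  shows "satisfies_rels H f (tb_rels n)"
proof -
  interpret tb_relations H n "\<lambda>i. f (TVir i)" "\<lambda>i. f (TSig i)" "\<lambda>i. f (TBar i)" by (rule assms)
  note eval = s_def v_def b_def m_assoc le_diff_iff_add_le
  show ?thesis
    unfolding satisfies_rels_def tb_rels_def
    apply (intro ballI)
    apply (elim UnE; clarify)
    subgoal for _ _ i using S_braid[of i] by (simp add: eval)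
    subgoal for _ _ i j using S_commute[of i j] S_commute[of j i] by (auto simp: eval)
    subgoal for _ _ i using V_involution[of i] by (simp add: eval)
    subgoal for _ _ i j using V_commute[of i j] V_commute[of j i] by (auto simp: eval)
    subgoal for _ _ i using V_braid[of i] by (simp add: eval)
    subgoal for _ _ i using B_involution[of i] by (simp add: eval)
    subgoal for _ _ i j using B_commute[of i j] B_commute[of j i] by (cases "i < j") (auto simp: eval)
    subgoal for _ _ i j using S_commute_V[of i j] by (simp add: eval)
    subgoal for _ _ i using V_S_V[of i] by (simp add: eval)
    subgoal for _ _ i using B_V[of i] by (simp add: eval)
    subgoal for _ _ i using B_S_twist[of i] by (simp add: eval)
    subgoal for _ _ i j using B_commute_V[of i j] by (simp add: eval)
    subgoal for _ _ i j using B_commute_S[of i j] by (simp add: eval)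
    done
qed

lemma tb_relations_of_satisfies:
  assumes "group H" and f: "f \<in> UNIV \<rightarrow> carrier H" and sat: "satisfies_rels H f (tb_rels n)"
  shows "tb_relations H n (\<lambda>i. f (TVir i)) (\<lambda>i. f (TSig i)) (\<lambda>i. f (TBar i))"
proof -
  interpret group H by (rule assms(1))
  have [simp]: "f x \<in> carrier H" for x using f by auto
  have rel: "word_eval H f l = word_eval H f r" if "(l, r) \<in> tb_rels n" for l r
    using sat that by (auto simp: satisfies_rels_def)
  note eval = s_def v_def b_def m_assoc tb_rels_def le_diff_iff_add_le
  have sym: "sym_gens H n (\<lambda>i. f (TVir i))"
    using assms virtual_rels_subset(1) by (intro sym_gens_of_satisfies) (auto intro: satisfies_rels_subset)
  show ?thesis
    apply (intro tb_relations.intro[OF sym] tb_relations_axioms.intro)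
    subgoal by simp
    subgoal by simp
    subgoal for i using rel[of "s i @ s (i + 1) @ s i" "s (i + 1) @ s i @ s (i + 1)"] by (simp add: eval)
    subgoal for i j using rel[of "s i @ s j" "s j @ s i"] by (simp add: eval)
    subgoal for i using rel[of "b i @ b i" "[]"] by (simp add: eval)
    subgoal for i j using rel[of "b i @ b j" "b j @ b i"] by (simp add: eval)
    subgoal for i j using rel[of "s i @ v j" "v j @ s i"] by (simp add: eval)
    subgoal for i using rel[of "v i @ s (i + 1) @ v i" "v (i + 1) @ s i @ v (i + 1)"] by (simp add: eval)
    subgoal for i using rel[of "b i @ v i" "v i @ b (i + 1)"] by (simp add: eval)
    subgoal for i
      using rel[of "b i @ b (i + 1) @ s i @ b (i + 1) @ b i" "v i @ s i @ v i"] by (simp add: eval)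
    subgoal for i j using rel[of "b i @ v j" "v j @ b i"] by (simp add: eval)
    subgoal for i j using rel[of "b i @ s j" "s j @ b i"] by (simp add: eval)
    done
qed

lemma satisfies_red_rels_of_red_relations:
  assumes "red_relations H n (\<lambda>i. f (TVir i)) (f (TSig 1)) (f (TBar 1))"
  shows "satisfies_rels H f (red_rels n)"
proof -
  interpret red_relations H n "\<lambda>i. f (TVir i)" "f (TSig 1)" "f (TBar 1)" by (rule assms)
  note eval = s_def v_def b_def m_assoc vconj_def le_diff_iff_add_le
    sigma_closed[simplified] beta_closed[simplified]
  show ?thesis
    unfolding satisfies_rels_def red_rels_def
    apply (intro ballI)
    apply (elim UnE; clarify)
    subgoal for _ _ i using V_braid[of i] by (simp add: eval)
    subgoal for _ _ i j using V_commute[of i j] V_commute[of j i] by (auto simp: eval)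
    subgoal for _ _ i using V_involution[of i] by (simp add: eval)
    subgoal for _ _ j using sigma_commute_V[of j] by (simp add: eval)
    subgoal using beta_involution by (simp add: eval)
    subgoal for _ _ j using beta_commute_V[of j] by (simp add: eval)
    subgoal using sigma_braid by (simp add: eval)
    subgoal using sigma_commute_far by (simp add: eval)
    subgoal using beta_commute by (simp add: eval)
    subgoal using sigma_beta_commute by (simp add: eval)
    subgoal using beta_twist by (simp add: eval)
    done
qed

lemma red_relations_of_satisfies:
  assumes "group H" and f: "f \<in> UNIV \<rightarrow> carrier H" and sat: "satisfies_rels H f (red_rels n)"
  shows "red_relations H n (\<lambda>i. f (TVir i)) (f (TSig 1)) (f (TBar 1))"
proof -
  interpret group H by (rule assms(1))
  have [simp]: "f x \<in> carrier H" for x using f by auto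
  have rel: "word_eval H f l = word_eval H f r" if "(l, r) \<in> red_rels n" for l r
    using sat that by (auto simp: satisfies_rels_def)
  have sym: "sym_gens H n (\<lambda>i. f (TVir i))"
    using assms virtual_rels_subset(2) by (intro sym_gens_of_satisfies) (auto intro: satisfies_rels_subset)
  interpret sym_gens H n "\<lambda>i. f (TVir i)" by (rule sym)
  note eval = s_def v_def b_def m_assoc red_rels_def le_diff_iff_add_le vconj_def
  show ?thesis
    apply (intro red_relations.intro[OF sym] red_relations_axioms.intro)
    subgoal by simp
    subgoal by simp
    subgoal for j using rel[of "s 1 @ v j" "v j @ s 1"] by (simp add: eval)
    subgoal using rel[of "b 1 @ b 1" "[]"] by (simp add: eval)
    subgoal for j using rel[of "b 1 @ v j" "v j @ b 1"] by (simp add: eval)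
    subgoal
      using rel[of "(v 1 @ s 1 @ v 1) @ (v 2 @ s 1 @ v 2) @ (v 1 @ s 1 @ v 1)"
          "(v 2 @ s 1 @ v 2) @ (v 1 @ s 1 @ v 1) @ (v 2 @ s 1 @ v 2)"]
      by (simp add: eval)
    subgoal
      using rel[of "s 1 @ (v 2 @ v 3 @ v 1 @ v 2 @ s 1 @ v 2 @ v 1 @ v 3 @ v 2)"
          "(v 2 @ v 3 @ v 1 @ v 2 @ s 1 @ v 2 @ v 1 @ v 3 @ v 2) @ s 1"]
      by (simp add: eval)
    subgoal using rel[of "b 1 @ (v 1 @ b 1 @ v 1)" "(v 1 @ b 1 @ v 1) @ b 1"] by (simp add: eval)
    subgoal
      using rel[of "s 1 @ (v 2 @ v 1 @ b 1 @ v 1 @ v 2)" "(v 2 @ v 1 @ b 1 @ v 1 @ v 2) @ s 1"]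
      by (simp add: eval)
    subgoal
      using rel[of "(v 1 @ b 1 @ v 1) @ b 1 @ s 1 @ b 1 @ (v 1 @ b 1 @ v 1)" "v 1 @ s 1 @ v 1"]
      by (simp add: eval)
    done
qed

lemma tb_rels_wf: "(l, r) \<in> tb_rels n \<Longrightarrow> wf_word (tb_gens n) l \<and> wf_word (tb_gens n) r"
  by (auto simp: tb_rels_def tb_gens_def s_def v_def b_def)

lemma red_rels_wf: "4 \<le> n \<Longrightarrow> (l, r) \<in> red_rels n \<Longrightarrow> wf_word (red_gens n) l \<and> wf_word (red_gens n) r"
  by (auto simp: red_rels_def red_gens_def s_def v_def b_def)

section \<open>The isomorphism\<close>

lemma wf_red_letters:
  "wf_word (red_gens n) (s 1)" "wf_word (red_gens n) (b 1)"
  "1 \<le> i \<Longrightarrow> i + 1 \<le> n \<Longrightarrow> wf_word (red_gens n) (v i)"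
  by (auto simp: red_gens_def s_def b_def v_def)

lemma wf_sig_word: "i + 2 \<le> n \<Longrightarrow> wf_word (red_gens n) (sig_word i)"
  by (auto simp: sig_word_def vdown_def vup_def red_gens_def s_def v_def wf_word_def)

lemma wf_bar_word: "i + 1 \<le> n \<Longrightarrow> wf_word (red_gens n) (bar_word i)"
  by (auto simp: bar_word_def vdown_def vup_def red_gens_def b_def v_def wf_word_def)

lemma red_gens_subset_tb_gens: "2 \<le> n \<Longrightarrow> red_gens n \<subseteq> tb_gens n"
  by (auto simp: red_gens_def tb_gens_def)

locale twisted_braid_index =
  fixes n :: nat
  assumes n_ge_4: "4 \<le> n"
begin

abbreviation "red_gen \<equiv> gen_class (red_gens n) (red_rels n)"
abbreviation "tb_gen \<equiv> gen_class (tb_gens n) (tb_rels n)"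

lemma red_gen_closed [simp]: "red_gen x \<in> carrier (RedTB n)"
  unfolding RedTB_def by (rule gen_class_closed)

lemma tb_gen_closed [simp]: "tb_gen x \<in> carrier (TB n)"
  unfolding TB_def by (rule gen_class_closed)

lemma red_relations_RedTB:
  "red_relations (RedTB n) n (\<lambda>i. red_gen (TVir i)) (red_gen (TSig 1)) (red_gen (TBar 1))"
  unfolding RedTB_def using n_ge_4
  by (intro red_relations_of_satisfies group_presented_group presented_group_satisfies_rels red_rels_wf)
    (auto simp: gen_class_closed)

lemma tb_relations_TB:
  "tb_relations (TB n) n (\<lambda>i. tb_gen (TVir i)) (\<lambda>i. tb_gen (TSig i)) (\<lambda>i. tb_gen (TBar i))"
  unfolding TB_def
  by (intro tb_relations_of_satisfies group_presented_group presented_group_satisfies_rels tb_rels_wf)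
    (auto simp: gen_class_closed)

sublocale R: red_relations "RedTB n" n "\<lambda>i. red_gen (TVir i)" "red_gen (TSig 1)" "red_gen (TBar 1)"
  by (rule red_relations_RedTB)

sublocale T: tb_relations "TB n" n "\<lambda>i. tb_gen (TVir i)" "\<lambda>i. tb_gen (TSig i)" "\<lambda>i. tb_gen (TBar i)"
  by (rule tb_relations_TB)

lemma word_eval_red_gen:
  "wf_word (red_gens n) w \<Longrightarrow> word_eval (RedTB n) red_gen w = pres_class (red_gens n) (red_rels n) w"
  unfolding RedTB_def by (rule word_eval_gen_class)

lemma word_eval_tb_gen:
  "wf_word (tb_gens n) w \<Longrightarrow> word_eval (TB n) tb_gen w = pres_class (tb_gens n) (tb_rels n) w"
  unfolding TB_def by (rule word_eval_gen_class)

lemma wf_tb_gens_of_red_gens: "wf_word (red_gens n) w \<Longrightarrow> wf_word (tb_gens n) w"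
  using red_gens_subset_tb_gens[of n] n_ge_4 by (auto simp: wf_word_def)

lemma RedTB_sig_word:
  "i + 2 \<le> n \<Longrightarrow> pres_class (red_gens n) (red_rels n) (sig_word i) = R.sig_shift (red_gen (TSig 1)) i"
  using R.word_eval_sig_word[of red_gen]
  by (simp add: wf_sig_word flip: word_eval_red_gen)

lemma RedTB_bar_word:
  "i + 1 \<le> n \<Longrightarrow> pres_class (red_gens n) (red_rels n) (bar_word i) = R.bar_shift (red_gen (TBar 1)) i"
  using R.word_eval_bar_word[of red_gen]
  by (simp add: wf_bar_word flip: word_eval_red_gen)

lemma tb_gen_TSig: "1 \<le> i \<Longrightarrow> i + 1 \<le> n \<Longrightarrow> tb_gen (TSig i) = pres_class (tb_gens n) (tb_rels n) (s i)"
  by (simp add: gen_class_def tb_gens_def s_def le_diff_iff_add_le)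

lemma tb_gen_TBar: "1 \<le> i \<Longrightarrow> i \<le> n \<Longrightarrow> tb_gen (TBar i) = pres_class (tb_gens n) (tb_rels n) (b i)"
  by (simp add: gen_class_def tb_gens_def b_def le_diff_iff_add_le)

lemma TB_sig_word:
  assumes "i + 2 \<le> n"
  shows "pres_class (tb_gens n) (tb_rels n) (sig_word i) =
    pres_class (tb_gens n) (tb_rels n) (s (i + 1))"
proof -
  have "pres_class (tb_gens n) (tb_rels n) (sig_word i) = word_eval (TB n) tb_gen (sig_word i)"
    using assms by (simp add: word_eval_tb_gen wf_sig_word wf_tb_gens_of_red_gens)
  also have "\<dots> = T.sig_shift (tb_gen (TSig 1)) i"
    using assms by (intro T.word_eval_sig_word) simp_all
  also have "\<dots> = tb_gen (TSig (i + 1))"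
    using assms T.sig_shift_S[of i] by simp
  finally show ?thesis
    using assms by (simp add: tb_gen_TSig)
qed

lemma TB_bar_word:
  assumes "i + 1 \<le> n"
  shows "pres_class (tb_gens n) (tb_rels n) (bar_word i) =
    pres_class (tb_gens n) (tb_rels n) (b (i + 1))"
proof -
  have "pres_class (tb_gens n) (tb_rels n) (bar_word i) = word_eval (TB n) tb_gen (bar_word i)"
    using assms by (simp add: word_eval_tb_gen wf_bar_word wf_tb_gens_of_red_gens)
  also have "\<dots> = T.bar_shift (tb_gen (TBar 1)) i"
    by (intro T.word_eval_bar_word) simp_all
  also have "\<dots> = tb_gen (TBar (i + 1))"
    using assms T.bar_shift_B[of i] by simp
  finally show ?thesis
    using assms by (simp add: tb_gen_TBar)
qed

text \<open>The paper's inverse isomorphism on generators, with values computed in \<open>RedTB n\<close>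
  (cf. \<open>RedTB_sig_word\<close>).\<close>

definition red_image :: "tbgen \<Rightarrow> tbgen word set" where
  "red_image x = (case x of
      TSig i \<Rightarrow> R.sig_shift (red_gen (TSig 1)) (i - 1)
    | TVir i \<Rightarrow> red_gen (TVir i)
    | TBar i \<Rightarrow> R.bar_shift (red_gen (TBar 1)) (i - 1))"

lemma red_image_closed: "red_image x \<in> carrier (RedTB n)"
  by (cases x) (simp_all add: red_image_def)

lemma satisfies_red_image: "satisfies_rels (RedTB n) red_image (tb_rels n)"
  using R.tb_relations_shift by (intro satisfies_tb_rels_of_tb_relations) (simp add: red_image_def)

lemma satisfies_tb_gen: "satisfies_rels (TB n) tb_gen (red_rels n)"
  using T.red_relations_S1_B1[OF n_ge_4] by (intro satisfies_red_rels_of_red_relations) simp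

lemma induced_hom_TB_class:
  assumes "wf_word (red_gens n) w"
  shows "induced_hom (TB n) tb_gen (pres_class (red_gens n) (red_rels n) w) =
    pres_class (tb_gens n) (tb_rels n) w"
proof -
  have "induced_hom (TB n) tb_gen (pres_class (red_gens n) (red_rels n) w) = word_eval (TB n) tb_gen w"
    using satisfies_tb_gen assms by (intro T.induced_hom_class) simp_all
  then show ?thesis
    using assms by (simp add: word_eval_tb_gen wf_tb_gens_of_red_gens)
qed

lemma induced_hom_red_image_tb_gen:
  assumes "x \<in> red_gens n"
  shows "induced_hom (RedTB n) red_image (tb_gen x) = red_gen x"
proof -
  have "x \<in> tb_gens n" using assms red_gens_subset_tb_gens[of n] n_ge_4 by auto
  then have "induced_hom (RedTB n) red_image (tb_gen x) = red_image x"
    using satisfies_red_image red_image_closed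
    by (simp add: gen_class_def R.induced_hom_class[of red_image "tb_gens n"])
  also have "\<dots> = red_gen x"
  proof -
    have "x = TSig 1 \<or> x = TBar 1 \<or> (\<exists>i. x = TVir i)"
      using assms by (auto simp: red_gens_def)
    then show ?thesis by (elim disjE exE) (simp_all add: red_image_def)
  qed
  finally show ?thesis .
qed

lemma induced_hom_tb_gen_red_image:
  assumes "y \<in> tb_gens n"
  shows "induced_hom (TB n) tb_gen (red_image y) = tb_gen y"
  using assms
proof (cases y)
  case (TSig i)
  then have i: "1 \<le> i" "(i - 1) + 2 \<le> n" using assms by (auto simp: tb_gens_def)
  then have "red_image y = pres_class (red_gens n) (red_rels n) (sig_word (i - 1))"
    by (simp add: TSig red_image_def RedTB_sig_word)
  then show ?thesis
    using i by (simp add: TSig induced_hom_TB_class wf_sig_word TB_sig_word tb_gen_TSig)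
next
  case (TVir i)
  then have "1 \<le> i" "i + 1 \<le> n" using assms by (auto simp: tb_gens_def)
  then show ?thesis
    using induced_hom_TB_class[of "v i"]
    by (simp add: TVir red_image_def gen_class_def red_gens_def tb_gens_def v_def le_diff_iff_add_le)
next
  case (TBar i)
  then have i: "1 \<le> i" "(i - 1) + 1 \<le> n" using assms by (auto simp: tb_gens_def)
  then have "red_image y = pres_class (red_gens n) (red_rels n) (bar_word (i - 1))"
    by (simp add: TBar red_image_def RedTB_bar_word)
  then show ?thesis
    using i by (simp add: TBar induced_hom_TB_class wf_bar_word TB_bar_word tb_gen_TBar)
qed

lemma induced_hom_TB_iso: "induced_hom (TB n) tb_gen \<in> iso (RedTB n) (TB n)"
  using induced_hom_red_image_tb_gen induced_hom_tb_gen_red_image satisfies_tb_gen satisfies_red_image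
    red_image_closed
  unfolding RedTB_def TB_def by (intro induced_hom_iso) (auto simp: gen_class_closed)

end

theorem theorem9:
  fixes n :: nat
  assumes "n \<ge> 4"
  shows "\<exists>h. h \<in> iso (RedTB n) (TB n)
     \<and> h (pres_class (red_gens n) (red_rels n) (s 1)) = pres_class (tb_gens n) (tb_rels n) (s 1)
     \<and> h (pres_class (red_gens n) (red_rels n) (b 1)) = pres_class (tb_gens n) (tb_rels n) (b 1)
     \<and> (\<forall>i. 1 \<le> i \<and> i \<le> n - 1 \<longrightarrow>
          h (pres_class (red_gens n) (red_rels n) (v i)) = pres_class (tb_gens n) (tb_rels n) (v i))
     \<and> (\<forall>i. 1 \<le> i \<and> i \<le> n - 2 \<longrightarrow>
          h (pres_class (red_gens n) (red_rels n) (sig_word i)) = pres_class (tb_gens n) (tb_rels n) (s (i+1)))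
     \<and> (\<forall>i. 1 \<le> i \<and> i \<le> n - 1 \<longrightarrow>
          h (pres_class (red_gens n) (red_rels n) (bar_word i)) = pres_class (tb_gens n) (tb_rels n) (b (i+1)))"
proof -
  interpret twisted_braid_index n using assms by unfold_locales
  let ?h = "induced_hom (TB n) tb_gen"
  show ?thesis
  proof (intro exI conjI allI impI)
    show "?h \<in> iso (RedTB n) (TB n)"
      by (rule induced_hom_TB_iso)
    show "?h (pres_class (red_gens n) (red_rels n) (s 1)) = pres_class (tb_gens n) (tb_rels n) (s 1)"
      "?h (pres_class (red_gens n) (red_rels n) (b 1)) = pres_class (tb_gens n) (tb_rels n) (b 1)"
      by (rule induced_hom_TB_class wf_red_letters)+
    show "?h (pres_class (red_gens n) (red_rels n) (v i)) = pres_class (tb_gens n) (tb_rels n) (v i)"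
      if "1 \<le> i \<and> i \<le> n - 1" for i
      using that assms by (intro induced_hom_TB_class wf_red_letters) auto
    show "?h (pres_class (red_gens n) (red_rels n) (sig_word i)) =
      pres_class (tb_gens n) (tb_rels n) (s (i + 1))"
      if "1 \<le> i \<and> i \<le> n - 2" for i
      using that assms by (auto simp: induced_hom_TB_class wf_sig_word TB_sig_word)
    show "?h (pres_class (red_gens n) (red_rels n) (bar_word i)) =
      pres_class (tb_gens n) (tb_rels n) (b (i + 1))"
      if "1 \<le> i \<and> i \<le> n - 1" for i
      using that assms by (auto simp: induced_hom_TB_class wf_bar_word TB_bar_word)
  qed
qed

end
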